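(* Let $\mathcal{O}_K$ be a Henselian discrete valuation domain with field of fractions $K$ of characteristic $0$ and algebraically closed residue field of characteristic $2$, with normalized valuation $v$. Let $E_1/K$ and $E_2/K$ be elliptic curves related by a $2$-isogeny over $K$ from $E_1$ to $E_2$, and let $j_1:=j(E_1)$, $j_2:=j(E_2)$. (i) If $v(j_1)=v(j_2)>0$, then $v(j_1)=v(j_2)=6v(2)$. (ii) If $0<v(j_1)<v(j_2)$, then $v(j_1)<6v(2)$; moreover: (a) if $v(j_1)<4v(2)$ then $v(j_2)=2v(j_1)$; (b) if $4v(2)<v(j_1)<6v(2)$ then $v(j_2)=12v(2)-v(j_1)$; (c) if $v(j_1)=4v(2)$ then $v(j_2)=8v(2)+3r$ for some integer $r\ge 0$. (iii) If $K=\mathbb{Q}_2^{\mathrm{unr}}$ (the maximal unramified extension of $\mathbb{Q}_2$), $j_1,j_2\in\mathbb{Q}_2\subset K$ and $v(j_1)=4v(2)<v(j_2)$, then $v(j_2)=8v(2)+3r$ for some integer $r\ge 1$. *)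

theory Defs
  imports "HOL-Computational_Algebra.Polynomial"
begin

text \<open>A normalized discrete valuation: v is only meaningful on nonzero elements
(v 0 = infinity is not represented); it is multiplicative-to-additive, satisfies
the ultrametric inequality and is surjective onto the integers (normalized).\<close>

definition ndval :: "('k::field \<Rightarrow> int) \<Rightarrow> bool" where
  "ndval v \<longleftrightarrow>
     (\<forall>x y. x \<noteq> 0 \<longrightarrow> y \<noteq> 0 \<longrightarrow> v (x * y) = v x + v y) \<and>
     (\<forall>x y. x \<noteq> 0 \<longrightarrow> y \<noteq> 0 \<longrightarrow> x + y \<noteq> 0 \<longrightarrow> min (v x) (v y) \<le> v (x + y)) \<and>
     (\<forall>n. \<exists>x. x \<noteq> 0 \<and> v x = n)"

definition vring :: "('k::field \<Rightarrow> int) \<Rightarrow> 'k set" where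
  "vring v = {x. x = 0 \<or> 0 \<le> v x}"

definition vmax :: "('k::field \<Rightarrow> int) \<Rightarrow> 'k set" where
  "vmax v = {x. x = 0 \<or> 0 < v x}"

definition vpoly :: "('k::field \<Rightarrow> int) \<Rightarrow> 'k poly \<Rightarrow> bool" where
  "vpoly v f \<longleftrightarrow> (\<forall>i. coeff f i \<in> vring v)"

definition henselian :: "('k::field \<Rightarrow> int) \<Rightarrow> bool" where
  "henselian v \<longleftrightarrow>
     (\<forall>f a. lead_coeff f = 1 \<and> vpoly v f \<and> a \<in> vring v \<and> poly f a \<in> vmax v \<and>
            poly (pderiv f) a \<notin> vmax v \<longrightarrow>
            (\<exists>b \<in> vring v. poly f b = 0 \<and> b - a \<in> vmax v))"

text \<open>The residue field O/m is algebraically closed: every monic nonconstant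
polynomial over O has a root modulo m.\<close>
definition residue_alg_closed :: "('k::field \<Rightarrow> int) \<Rightarrow> bool" where
  "residue_alg_closed v \<longleftrightarrow>
     (\<forall>f. lead_coeff f = 1 \<and> 1 \<le> degree f \<and> vpoly v f \<longrightarrow>
          (\<exists>a \<in> vring v. poly f a \<in> vmax v))"

definition Qclos :: "('k::field_char_0 \<Rightarrow> int) \<Rightarrow> 'k set" where
  "Qclos v = {x. \<forall>n. \<exists>q \<in> \<rat>. x = q \<or> n \<le> v (x - q)}"

definition vcauchy :: "('k::field \<Rightarrow> int) \<Rightarrow> (nat \<Rightarrow> 'k) \<Rightarrow> bool" where
  "vcauchy v s \<longleftrightarrow> (\<forall>N. \<exists>M. \<forall>m\<ge>M. \<forall>k\<ge>M. s m = s k \<or> N \<le> v (s m - s k))"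

definition vconverges :: "('k::field \<Rightarrow> int) \<Rightarrow> (nat \<Rightarrow> 'k) \<Rightarrow> 'k \<Rightarrow> bool" where
  "vconverges v s L \<longleftrightarrow> (\<forall>N. \<exists>M. \<forall>m\<ge>M. s m = L \<or> N \<le> v (s m - L))"

text \<open>(K,v) is (isomorphic as a valued field to) the maximal unramified extension of Q_2:
the closure of Q in K is complete (hence is Q_2 with the 2-adic valuation), K is algebraic
over it, v(2) = 1 (unramified, v normalized), and the residue field is algebraically closed.\<close>
definition is_Q2unr :: "('k::field_char_0 \<Rightarrow> int) \<Rightarrow> bool" where
  "is_Q2unr v \<longleftrightarrow>
     v 2 = 1 \<and> residue_alg_closed v \<and>
     (\<forall>s. (\<forall>n. s n \<in> Qclos v) \<and> vcauchy v s \<longrightarrow> (\<exists>L \<in> Qclos v. vconverges v s L)) \<and>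
     (\<forall>x. \<exists>p. p \<noteq> 0 \<and> (\<forall>i. coeff p i \<in> Qclos v) \<and> poly p x = 0)"

datatype 'k weier = W (a1: 'k) (a2: 'k) (a3: 'k) (a4: 'k) (a6: 'k)

definition b2 :: "'k::field weier \<Rightarrow> 'k" where "b2 E = a1 E ^ 2 + 4 * a2 E"
definition b4 :: "'k::field weier \<Rightarrow> 'k" where "b4 E = 2 * a4 E + a1 E * a3 E"
definition b6 :: "'k::field weier \<Rightarrow> 'k" where "b6 E = a3 E ^ 2 + 4 * a6 E"
definition b8 :: "'k::field weier \<Rightarrow> 'k" where
  "b8 E = a1 E ^ 2 * a6 E + 4 * a2 E * a6 E - a1 E * a3 E * a4 E + a2 E * a3 E ^ 2 - a4 E ^ 2"
definition c4 :: "'k::field weier \<Rightarrow> 'k" where "c4 E = b2 E ^ 2 - 24 * b4 E"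
definition disc :: "'k::field weier \<Rightarrow> 'k" where
  "disc E = - (b2 E ^ 2 * b8 E) - 8 * b4 E ^ 3 - 27 * b6 E ^ 2 + 9 * b2 E * b4 E * b6 E"
definition jinv :: "'k::field weier \<Rightarrow> 'k" where "jinv E = c4 E ^ 3 / disc E"

definition elliptic :: "'k::field weier \<Rightarrow> bool" where "elliptic E \<longleftrightarrow> disc E \<noteq> 0"

text \<open>K-isomorphism of Weierstrass equations: E' arises from E by
x = u^2 x' + r, y = u^3 y' + s u^2 x' + t with u,r,s,t in K, u nonzero (Silverman III.1).\<close>
definition weier_iso :: "'k::field weier \<Rightarrow> 'k weier \<Rightarrow> bool" where
  "weier_iso E E' \<longleftrightarrow> (\<exists>u r s t. u \<noteq> 0 \<and>
     u * a1 E' = a1 E + 2 * s \<and>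
     u ^ 2 * a2 E' = a2 E - s * a1 E + 3 * r - s ^ 2 \<and>
     u ^ 3 * a3 E' = a3 E + r * a1 E + 2 * t \<and>
     u ^ 4 * a4 E' = a4 E - s * a3 E + 2 * r * a2 E - (t + r * s) * a1 E + 3 * r ^ 2 - 2 * s * t \<and>
     u ^ 6 * a6 E' = a6 E + r * a4 E + r ^ 2 * a2 E + r ^ 3 - t * a3 E - t ^ 2 - r * t * a1 E)"

text \<open>E1 and E2 are related by a K-rational 2-isogeny E1 -> E2 (char K = 0): E1 is
K-isomorphic to y^2 = x^3 + a x^2 + b x with the kernel generated by (0,0), and E2 is
K-isomorphic to its quotient, given by Velu's formula y^2 = x^3 - 2a x^2 + (a^2-4b) x,
the isogeny being (x,y) |-> (y^2/x^2, y(b - x^2)/x^2).\<close>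
definition two_isogenous :: "'k::field weier \<Rightarrow> 'k weier \<Rightarrow> bool" where
  "two_isogenous E1 E2 \<longleftrightarrow> (\<exists>a b. b \<noteq> 0 \<and> a ^ 2 - 4 * b \<noteq> 0 \<and>
     weier_iso E1 (W 0 a 0 b 0) \<and> weier_iso E2 (W 0 (- 2 * a) 0 (a ^ 2 - 4 * b) 0))"

end

theory Submission
  imports Defs
begin

text \<open>After a change of variables, \<open>E1\<close> is \<open>y\<^sup>2 = x\<^sup>3 + a x\<^sup>2 + b x\<close> and \<open>E2\<close> is its
Velu quotient; with \<open>u = a\<^sup>2/b - 4\<close> the two j-invariants are \<open>256 (u + 1)\<^sup>3 / u\<close> and
\<open>16 (u + 16)\<^sup>3 / u\<^sup>2\<close>. As \<open>v 256 = 8 v 2\<close> and \<open>v 16 = 4 v 2\<close>, the ultrametric inequality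
determines \<open>v j1\<close> and \<open>v j2\<close> from \<open>v u\<close> alone, except for \<open>v u = 4 v 2\<close>, where only
\<open>v (u + 16) \<ge> 4 v 2\<close> is known; this gives (i) and (ii). For (iii) write \<open>u = 16 u0\<close> with \<open>u0\<close>
a unit: then \<open>j1 / 16 = (16 u0 + 1)\<^sup>3 / u0\<close> is a unit of \<open>\<int>\<^sub>2\<close>, hence \<open>\<equiv> 1 mod 2\<close>,
which forces \<open>u0 \<equiv> 1\<close> and so \<open>2\<^sup>5\<close> divides \<open>u + 16\<close>.
Neither Henselianity, nor the residue field, nor the rationality of \<open>j2\<close> enters the argument.\<close>

definition weier_change :: "'k::field \<Rightarrow> 'k \<Rightarrow> 'k \<Rightarrow> 'k \<Rightarrow> 'k weier \<Rightarrow> 'k weier" where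
  "weier_change u r s t E =
     W ((a1 E + 2 * s) / u)
       ((a2 E - s * a1 E + 3 * r - s ^ 2) / u ^ 2)
       ((a3 E + r * a1 E + 2 * t) / u ^ 3)
       ((a4 E - s * a3 E + 2 * r * a2 E - (t + r * s) * a1 E + 3 * r ^ 2 - 2 * s * t) / u ^ 4)
       ((a6 E + r * a4 E + r ^ 2 * a2 E + r ^ 3 - t * a3 E - t ^ 2 - r * t * a1 E) / u ^ 6)"

lemma weier_iso_iff_change:
  "weier_iso E E' \<longleftrightarrow> (\<exists>u r s t. u \<noteq> 0 \<and> E' = weier_change u r s t E)"
  unfolding weier_iso_def weier_change_def
  by (cases E') (auto simp: eq_divide_eq mult.commute)

lemma c4_weier_change: "u \<noteq> 0 \<Longrightarrow> c4 (weier_change u r s t E) = c4 E / u ^ 4"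
  unfolding weier_change_def c4_def b2_def b4_def by (simp add: field_simps) algebra

lemma disc_weier_change: "u \<noteq> 0 \<Longrightarrow> disc (weier_change u r s t E) = disc E / u ^ 12"
  unfolding weier_change_def disc_def b2_def b4_def b6_def b8_def by (simp add: field_simps) algebra

lemma jinv_weier_iso:
  assumes "weier_iso E E'"
  shows "jinv E' = jinv E"
proof -
  obtain u r s t where "u \<noteq> 0" and E': "E' = weier_change u r s t E"
    using assms by (auto simp: weier_iso_iff_change)
  then show ?thesis
    unfolding jinv_def E' c4_weier_change[OF \<open>u \<noteq> 0\<close>] disc_weier_change[OF \<open>u \<noteq> 0\<close>]
    by (cases "disc E = 0") (simp_all add: field_simps flip: power_mult)
qed

lemma c4_W0: "c4 (W 0 a 0 b 0) = 16 * (a ^ 2 - 3 * b)"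
  unfolding c4_def b2_def b4_def by (simp add: algebra_simps power2_eq_square)

lemma disc_W0: "disc (W 0 a 0 b 0) = 16 * b ^ 2 * (a ^ 2 - 4 * b)"
  unfolding disc_def b2_def b4_def b6_def b8_def
  by (simp add: algebra_simps power2_eq_square power3_eq_cube)

lemma jinv_two_isogenous:
  fixes E1 E2 :: "'k::field_char_0 weier"
  assumes "two_isogenous E1 E2"
  obtains u where "u \<noteq> 0" "jinv E1 = 256 * (u + 1) ^ 3 / u" "jinv E2 = 16 * (u + 16) ^ 3 / u ^ 2"
proof -
  obtain a b where b: "b \<noteq> 0" and ab: "a ^ 2 - 4 * b \<noteq> 0"
    and iso1: "weier_iso E1 (W 0 a 0 b 0)"
    and iso2: "weier_iso E2 (W 0 (- 2 * a) 0 (a ^ 2 - 4 * b) 0)"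
    using assms unfolding two_isogenous_def by blast
  define u where "u = a ^ 2 / b - 4"
  have a2: "a ^ 2 = b * (u + 4)"
    using b by (simp add: u_def field_simps)
  have "u \<noteq> 0"
    using ab by (simp add: a2 algebra_simps)
  have c4_1: "c4 (W 0 a 0 b 0) = 16 * b * (u + 1)"
    and disc_1: "disc (W 0 a 0 b 0) = 16 * b ^ 3 * u"
    and c4_2: "c4 (W 0 (- 2 * a) 0 (a ^ 2 - 4 * b) 0) = 16 * b * (u + 16)"
    and disc_2: "disc (W 0 (- 2 * a) 0 (a ^ 2 - 4 * b) 0) = 256 * b ^ 3 * u ^ 2"
    unfolding c4_W0 disc_W0 power_mult_distrib a2
    by (simp_all add: algebra_simps power2_eq_square power3_eq_cube)
  show thesis
  proof
    have "jinv E1 = jinv (W 0 a 0 b 0)"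
      using jinv_weier_iso[OF iso1] ..
    also have "\<dots> = (16 * b * (u + 1)) ^ 3 / (16 * b ^ 3 * u)"
      unfolding jinv_def c4_1 disc_1 ..
    also have "\<dots> = 256 * (u + 1) ^ 3 / u"
      using b by (simp add: power_mult_distrib)
    finally show "jinv E1 = 256 * (u + 1) ^ 3 / u" .
    have "jinv E2 = jinv (W 0 (- 2 * a) 0 (a ^ 2 - 4 * b) 0)"
      using jinv_weier_iso[OF iso2] ..
    also have "\<dots> = (16 * b * (u + 16)) ^ 3 / (256 * b ^ 3 * u ^ 2)"
      unfolding jinv_def c4_2 disc_2 ..
    also have "\<dots> = 16 * (u + 16) ^ 3 / u ^ 2"
      using b by (simp add: power_mult_distrib)
    finally show "jinv E2 = 16 * (u + 16) ^ 3 / u ^ 2" .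
  qed fact
qed

text \<open>\<open>vge v n x\<close> reads \<open>n \<le> v x\<close> under the convention \<open>v 0 = \<infinity>\<close>; the value \<open>v 0\<close> itself is junk.\<close>

definition vge :: "('k::field \<Rightarrow> int) \<Rightarrow> int \<Rightarrow> 'k \<Rightarrow> bool" where
  "vge v n x \<longleftrightarrow> x = 0 \<or> n \<le> v x"

lemma mem_Qclos_iff: "x \<in> Qclos v \<longleftrightarrow> (\<forall>n. \<exists>q\<in>\<rat>. vge v n (x - q))"
  unfolding Qclos_def vge_def by simp

locale discrete_valuation =
  fixes v :: "'k::field \<Rightarrow> int"
  assumes ndval: "ndval v"
begin

lemma v_mult: "x \<noteq> 0 \<Longrightarrow> y \<noteq> 0 \<Longrightarrow> v (x * y) = v x + v y"
  using ndval unfolding ndval_def by blast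

lemma v_add_ge_min: "x \<noteq> 0 \<Longrightarrow> y \<noteq> 0 \<Longrightarrow> x + y \<noteq> 0 \<Longrightarrow> min (v x) (v y) \<le> v (x + y)"
  using ndval unfolding ndval_def by blast

lemma v_one [simp]: "v 1 = 0"
  using v_mult[of 1 1] by simp

lemma v_uminus [simp]: "v (- x) = v x"
proof (cases "x = 0")
  case False
  have "v (-1) = 0"
    using v_mult[of "-1" "-1"] by simp
  with False show ?thesis
    using v_mult[of "-1" x] by simp
qed simp

lemma v_divide: "x \<noteq> 0 \<Longrightarrow> y \<noteq> 0 \<Longrightarrow> v (x / y) = v x - v y"
  using v_mult[of "x / y" y] by simp

lemma v_power: "x \<noteq> 0 \<Longrightarrow> v (x ^ n) = int n * v x"
  by (induction n) (auto simp: v_mult algebra_simps)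

lemma v_add_eq_left:
  assumes "x \<noteq> 0" "vge v n y" "v x < n"
  shows "x + y \<noteq> 0" "v (x + y) = v x"
proof -
  show "x + y \<noteq> 0"
    using assms by (auto simp: vge_def simp flip: eq_neg_iff_add_eq_0)
  then show "v (x + y) = v x"
    using assms v_add_ge_min[of x y] v_add_ge_min[of "x + y" "- y"] unfolding vge_def
    by (cases "y = 0") auto
qed

lemma v_add_eq_min: "x \<noteq> 0 \<Longrightarrow> y \<noteq> 0 \<Longrightarrow> v x \<noteq> v y \<Longrightarrow> v (x + y) = min (v x) (v y)"
  using v_add_eq_left[of x "v y" y] v_add_eq_left[of y "v x" x]
  by (cases "v x < v y") (auto simp: vge_def add.commute)

lemma vge_uminus: "vge v n (- x) \<longleftrightarrow> vge v n x"
  by (simp add: vge_def)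

lemma vge_mono: "vge v n x \<Longrightarrow> m \<le> n \<Longrightarrow> vge v m x"
  unfolding vge_def by auto

lemma vge_add: "vge v n x \<Longrightarrow> vge v n y \<Longrightarrow> vge v n (x + y)"
  unfolding vge_def using v_add_ge_min[of x y] by force

lemma vge_diff: "vge v n x \<Longrightarrow> vge v n y \<Longrightarrow> vge v n (x - y)"
  using vge_add[of n x "- y"] by (simp add: vge_uminus)

lemma vge_mult: "vge v n x \<Longrightarrow> vge v m y \<Longrightarrow> vge v (n + m) (x * y)"
  unfolding vge_def using v_mult[of x y] by (cases "x = 0"; cases "y = 0") auto

lemma vge_divide: "vge v n x \<Longrightarrow> y \<noteq> 0 \<Longrightarrow> vge v (n - v y) (x / y)"
  unfolding vge_def using v_divide[of x y] by (cases "x = 0") auto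

lemma vge_of_int: "vge v 0 (of_int k)"
proof (induction k rule: int_induct[where k = 0])
  case (step1 i)
  then show ?case using vge_add[of 0 "of_int i" 1] by (simp add: vge_def)
next
  case (step2 i)
  then show ?case using vge_diff[of 0 "of_int i" 1] by (simp add: vge_def)
qed (simp add: vge_def)

lemma vge_power_diff:
  assumes "vge v n (x - y)" "vge v 0 x" "vge v 0 y"
  shows "vge v n (x ^ k - y ^ k)"
proof (induction k)
  case (Suc k)
  have "x ^ Suc k - y ^ Suc k = x * (x ^ k - y ^ k) + (x - y) * y ^ k"
    by (simp add: algebra_simps)
  moreover have "vge v 0 (y ^ k)"
    using assms(3) by (cases "y = 0") (auto simp: vge_def v_power power_0_left)
  then have "vge v n ((x - y) * y ^ k)"
    using vge_mult[OF assms(1)] by fastforce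
  ultimately show ?case
    using vge_mult[OF assms(2) Suc.IH] vge_add by simp
qed (simp add: vge_def)

end

locale char_0_discrete_valuation = discrete_valuation v for v :: "'k::field_char_0 \<Rightarrow> int"
begin

lemma v_of_int_odd:
  assumes "v 2 = 1" "odd k"
  shows "v (of_int k) = 0"
proof -
  obtain j where k: "k = 2 * j + 1"
    using \<open>odd k\<close> by (rule oddE)
  have "vge v 1 (2 * of_int j)"
    using vge_mult[of 1 2 0 "of_int j"] vge_of_int \<open>v 2 = 1\<close> by (simp add: vge_def)
  then show ?thesis
    using v_add_eq_left(2)[of 1 1 "2 * of_int j"] by (simp add: k add.commute)
qed

lemma vge_of_int_even:
  assumes "v 2 = 1" "even k"
  shows "vge v 1 (of_int k)"
proof -
  obtain j where "k = 2 * j"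
    using \<open>even k\<close> by blast
  then show ?thesis
    using vge_mult[of 1 2 0 "of_int j"] vge_of_int \<open>v 2 = 1\<close> by (simp add: vge_def)
qed

lemma rat_unit_congruent_one:
  assumes "v 2 = 1" "q \<in> \<rat>" "q \<noteq> 0" "v q = 0"
  shows "vge v 1 (q - 1)"
proof -
  obtain m n where "n > 0" "coprime m n" and q: "q = of_int m / of_int n"
    using Rats_cases'[OF \<open>q \<in> \<rat>\<close>] .
  have "m \<noteq> 0"
    using q \<open>q \<noteq> 0\<close> by auto
  have v_of_int_even: "1 \<le> v (of_int k)" if "even k" "k \<noteq> 0" for k
    using vge_of_int_even[OF \<open>v 2 = 1\<close> \<open>even k\<close>] \<open>k \<noteq> 0\<close> by (simp add: vge_def)
  have vq: "v q = v (of_int m) - v (of_int n)"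
    using \<open>m \<noteq> 0\<close> \<open>n > 0\<close> by (simp add: q v_divide)
  have "odd m \<or> odd n"
    using coprime_common_divisor[OF \<open>coprime m n\<close>, of 2] by auto
  moreover have False if "even m" "odd n"
    using vq \<open>v q = 0\<close> v_of_int_even[OF \<open>even m\<close> \<open>m \<noteq> 0\<close>]
      v_of_int_odd[OF \<open>v 2 = 1\<close> \<open>odd n\<close>] by simp
  moreover have False if "odd m" "even n"
    using vq \<open>v q = 0\<close> v_of_int_even[OF \<open>even n\<close>] \<open>n > 0\<close>
      v_of_int_odd[OF \<open>v 2 = 1\<close> \<open>odd m\<close>] by simp
  ultimately have "odd m" "odd n"
    by blast+
  then have "vge v (1 - v (of_int n)) (of_int (m - n) / of_int n)"
    using vge_divide[OF vge_of_int_even[OF \<open>v 2 = 1\<close>], of "m - n" "of_int n"] \<open>n > 0\<close> by simp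
  moreover have "q - 1 = of_int (m - n) / of_int n"
    using \<open>n > 0\<close> by (simp add: q field_simps)
  ultimately show ?thesis
    using v_of_int_odd[OF \<open>v 2 = 1\<close> \<open>odd n\<close>] by simp
qed

lemma Qclos_divide:
  assumes "x \<in> Qclos v" "c \<in> \<rat>" "c \<noteq> 0"
  shows "x / c \<in> Qclos v"
  unfolding mem_Qclos_iff
proof
  fix n
  obtain q where "q \<in> \<rat>" "vge v (n + v c) (x - q)"
    using assms(1) unfolding mem_Qclos_iff by blast
  then have "q / c \<in> \<rat>" "vge v n (x / c - q / c)"
    using vge_divide[of "n + v c" "x - q" c] assms(2,3) by (simp_all add: diff_divide_distrib)
  then show "\<exists>q\<in>\<rat>. vge v n (x / c - q)" ..
qed

lemma Qclos_unit_congruent_one: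
  assumes "v 2 = 1" "x \<in> Qclos v" "x \<noteq> 0" "v x = 0"
  shows "vge v 1 (x - 1)"
proof -
  obtain q where "q \<in> \<rat>" and xq: "vge v 1 (x - q)"
    using assms(2) unfolding mem_Qclos_iff by blast
  then have "vge v 1 (- (x - q))"
    using vge_uminus[of 1 "x - q"] by simp
  then have "q \<noteq> 0" "v q = 0"
    using v_add_eq_left[of x 1 "- (x - q)"] assms(3,4) by simp_all
  then have "vge v 1 (q - 1)"
    using rat_unit_congruent_one[OF \<open>v 2 = 1\<close> \<open>q \<in> \<rat>\<close>] by simp
  then show ?thesis
    using vge_add[OF xq] by fastforce
qed

lemma v_j_source:
  assumes "u \<noteq> 0" "u + 1 \<noteq> 0"
  shows "v (256 * (u + 1) ^ 3 / u) = 8 * v 2 + 3 * v (u + 1) - v u"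
proof -
  have "v (256 :: 'k) = 8 * v 2"
    using v_power[of 2 8] by simp
  then show ?thesis
    using assms by (simp add: v_divide v_mult v_power)
qed

lemma v_j_target:
  assumes "u \<noteq> 0" "u + 16 \<noteq> 0"
  shows "v (16 * (u + 16) ^ 3 / u ^ 2) = 4 * v 2 + 3 * v (u + 16) - 2 * v u"
proof -
  have "v (16 :: 'k) = 4 * v 2"
    using v_power[of 2 4] by simp
  then show ?thesis
    using assms by (simp add: v_divide v_mult v_power)
qed

lemma v_shift_cases:
  assumes "0 < v 2" "u \<noteq> 0" "u + 1 \<noteq> 0" "u + 16 \<noteq> 0"
  obtains
    (negative) "v u < 0" "v (u + 1) = v u" "v (u + 16) = v u"
  | (unit) "v u = 0" "0 \<le> v (u + 1)" "v (u + 16) = 0"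
  | (small) "0 < v u" "v u < 4 * v 2" "v (u + 1) = 0" "v (u + 16) = v u"
  | (critical) "v u = 4 * v 2" "v (u + 1) = 0" "4 * v 2 \<le> v (u + 16)"
  | (large) "4 * v 2 < v u" "v (u + 1) = 0" "v (u + 16) = 4 * v 2"
proof -
  have v16: "v 16 = 4 * v 2"
    using v_power[of 2 4] by simp
  have add1: "v (u + 1) = min (v u) 0" if "v u \<noteq> 0"
    using v_add_eq_min[of u 1] that assms(2) by simp
  have add16: "v (u + 16) = min (v u) (4 * v 2)" if "v u \<noteq> 4 * v 2"
    using v_add_eq_min[of u 16] that assms(2) v16 by simp
  have "min (v u) 0 \<le> v (u + 1)" "min (v u) (4 * v 2) \<le> v (u + 16)"
    using v_add_ge_min[of u 1] v_add_ge_min[of u 16] assms(2-4) v16 by simp_all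
  then show thesis
    using that add1 add16 \<open>0 < v 2\<close>
    by (cases "v u < 0"; cases "v u = 0"; cases "v u < 4 * v 2"; cases "v u = 4 * v 2") auto
qed

lemma vge_u_plus_16_if_j_source_rational:
  assumes "v 2 = 1" "u \<noteq> 0" "v u = 4" and j1: "256 * (u + 1) ^ 3 / u \<in> Qclos v"
  shows "vge v 5 (u + 16)"
proof -
  define u0 where "u0 = u / 16"
  define w where "w = 16 * u0 + 1"
  define x where "x = w ^ 3 / u0"
  have v16: "v 16 = 4"
    using v_power[of 2 4] \<open>v 2 = 1\<close> by simp
  have "u0 \<noteq> 0" "v u0 = 0"
    using assms(2,3) v16 by (simp_all add: u0_def v_divide)
  have "vge v 4 (16 * u0)"
    using \<open>u0 \<noteq> 0\<close> \<open>v u0 = 0\<close> v16 by (simp add: vge_def v_mult)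
  then have "w \<noteq> 0" "v w = 0" "vge v 4 (w - 1)"
    using v_add_eq_left[of 1 4 "16 * u0"] by (simp_all add: w_def add.commute)
  have "x \<in> Qclos v"
    using Qclos_divide[OF j1, of 16] \<open>u0 \<noteq> 0\<close> by (simp add: x_def w_def u0_def field_simps)
  moreover have "x \<noteq> 0" "v x = 0"
    using \<open>w \<noteq> 0\<close> \<open>v w = 0\<close> \<open>u0 \<noteq> 0\<close> \<open>v u0 = 0\<close> by (simp_all add: x_def v_divide v_power)
  ultimately have "vge v 1 (x - 1)"
    using Qclos_unit_congruent_one \<open>v 2 = 1\<close> by blast
  then have "vge v 1 (w ^ 3 - u0)"
    using vge_mult[of 1 "x - 1" 0 u0] \<open>v u0 = 0\<close> \<open>u0 \<noteq> 0\<close> by (simp add: x_def vge_def algebra_simps)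
  moreover have "vge v 1 (w ^ 3 - 1 ^ 3)"
    using vge_power_diff[OF vge_mono[OF \<open>vge v 4 (w - 1)\<close>]] \<open>v w = 0\<close> by (simp add: vge_def)
  moreover have "vge v 1 2"
    using \<open>v 2 = 1\<close> by (simp add: vge_def)
  ultimately have "vge v 1 (2 - ((w ^ 3 - u0) - (w ^ 3 - 1 ^ 3)))"
    by (metis vge_diff)
  then have "vge v 1 (u0 + 1)"
    by (simp add: add.commute)
  then show ?thesis
    using vge_mult[of 4 16 1 "u0 + 1"] v16 by (simp add: vge_def u0_def algebra_simps)
qed

end

theorem proposition3p10:
  fixes v :: "'k::field_char_0 \<Rightarrow> int" and E1 E2 :: "'k weier"
  assumes dval: "ndval v" and hens: "henselian v"
    and resclosed: "residue_alg_closed v" and reschar2: "0 < v 2"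
    and ell1: "elliptic E1" and ell2: "elliptic E2"
    and isog: "two_isogenous E1 E2"
    and j1nz: "jinv E1 \<noteq> 0" and j2nz: "jinv E2 \<noteq> 0"
  shows "(v (jinv E1) = v (jinv E2) \<and> 0 < v (jinv E1) \<longrightarrow>
            v (jinv E1) = 6 * v 2 \<and> v (jinv E2) = 6 * v 2)
       \<and> (0 < v (jinv E1) \<and> v (jinv E1) < v (jinv E2) \<longrightarrow>
            v (jinv E1) < 6 * v 2
          \<and> (v (jinv E1) < 4 * v 2 \<longrightarrow> v (jinv E2) = 2 * v (jinv E1))
          \<and> (4 * v 2 < v (jinv E1) \<and> v (jinv E1) < 6 * v 2 \<longrightarrow>
               v (jinv E2) = 12 * v 2 - v (jinv E1))
          \<and> (v (jinv E1) = 4 * v 2 \<longrightarrow> (\<exists>r::int. 0 \<le> r \<and> v (jinv E2) = 8 * v 2 + 3 * r)))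
       \<and> (is_Q2unr v \<and> jinv E1 \<in> Qclos v \<and> jinv E2 \<in> Qclos v \<and>
          v (jinv E1) = 4 * v 2 \<and> 4 * v 2 < v (jinv E2) \<longrightarrow>
            (\<exists>r::int. 1 \<le> r \<and> v (jinv E2) = 8 * v 2 + 3 * r))"
proof -
  interpret char_0_discrete_valuation v
    by unfold_locales (rule dval)
  obtain u where "u \<noteq> 0" and j1: "jinv E1 = 256 * (u + 1) ^ 3 / u"
    and j2: "jinv E2 = 16 * (u + 16) ^ 3 / u ^ 2"
    using jinv_two_isogenous[OF isog] .
  moreover have "u + 1 \<noteq> 0" "u + 16 \<noteq> 0"
    using j1nz j2nz by (auto simp: j1 j2)
  ultimately have vj1: "v (jinv E1) = 8 * v 2 + 3 * v (u + 1) - v u"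
    and vj2: "v (jinv E2) = 4 * v 2 + 3 * v (u + 16) - 2 * v u"
    by (simp_all add: v_j_source v_j_target)
  from reschar2 \<open>u \<noteq> 0\<close> \<open>u + 1 \<noteq> 0\<close> \<open>u + 16 \<noteq> 0\<close> show ?thesis
  proof (cases rule: v_shift_cases)
    case critical
    have "5 \<le> v (u + 16)" if "is_Q2unr v" "jinv E1 \<in> Qclos v"
    proof -
      have "v 2 = 1"
        using \<open>is_Q2unr v\<close> by (simp add: is_Q2unr_def)
      then show ?thesis
        using vge_u_plus_16_if_j_source_rational[of u] \<open>u \<noteq> 0\<close> \<open>u + 16 \<noteq> 0\<close> critical that(2)
        by (simp add: j1 vge_def)
    qed
    then show ?thesis
      using critical reschar2 unfolding vj1 vj2 is_Q2unr_def
      by (auto intro!: exI[of _ "v (u + 16) - 4 * v 2"])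
  qed (use reschar2 vj1 vj2 in auto)
qed

end
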